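(* Let $q$ be a prime power and $\mathcal{S}$ a $q$-divisible spanning set of $q^2$ points in $\mathrm{PG}(3,q)$ that is not a $2$-cylinder. Then every line $L$ of $\mathrm{PG}(3,q)$ satisfies $|L\cap\mathcal{S}|\le q-2$.
   Context: $\mathrm{PG}(3,q)$ is the projective space of $\mathbb{F}_q^4$; points, lines and planes are subspaces of dimension $1,2,3$. A set $\mathcal{S}$ of points is spanning if it spans $\mathbb{F}_q^4$, and it is $q$-divisible if $|\mathcal{S}\cap H|\equiv|\mathcal{S}|\pmod q$ for every plane $H$. A $2$-cylinder is a set of $q^2$ points of the form $\bigcup_{i=1}^q (L_i\setminus\{F\})$, where $L_1,\dots,L_q$ are distinct lines through a common point $F$ (and $L_i\setminus\{F\}$ denotes the set of points of $L_i$ other than $F$). *)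

theory Defs
  imports "HOL-Analysis.Analysis"
begin

text \<open>PG(3,q) over a finite field 'a with q = CARD('a): points, lines, planes are the
  linear subspaces of 'a^4 of (vector space) dimension 1, 2, 3.\<close>

definition pg_sub :: "nat \<Rightarrow> ('a::field ^ 4) set \<Rightarrow> bool" where
  "pg_sub k W \<longleftrightarrow> vec.subspace W \<and> vec.dim W = k"

abbreviation pg_point :: "('a::field ^ 4) set \<Rightarrow> bool" where "pg_point \<equiv> pg_sub 1"
abbreviation pg_line  :: "('a::field ^ 4) set \<Rightarrow> bool" where "pg_line \<equiv> pg_sub 2"
abbreviation pg_plane :: "('a::field ^ 4) set \<Rightarrow> bool" where "pg_plane \<equiv> pg_sub 3"

definition spanning :: "('a::field ^ 4) set set \<Rightarrow> bool" where
  "spanning S \<longleftrightarrow> vec.span (\<Union>S) = UNIV"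

definition meet_card :: "('a::field ^ 4) set set \<Rightarrow> ('a ^ 4) set \<Rightarrow> nat" where
  "meet_card S W = card {P \<in> S. P \<subseteq> W}"

definition q_divisible :: "nat \<Rightarrow> ('a::field ^ 4) set set \<Rightarrow> bool" where
  "q_divisible q S \<longleftrightarrow> (\<forall>H. pg_plane H \<longrightarrow> meet_card S H mod q = card S mod q)"

definition two_cylinder :: "nat \<Rightarrow> ('a::field ^ 4) set set \<Rightarrow> bool" where
  "two_cylinder q S \<longleftrightarrow> (\<exists>F Ls. pg_point F \<and> card Ls = q \<and>
      (\<forall>L\<in>Ls. pg_line L \<and> F \<subseteq> L) \<and>
      S = {P. pg_point P \<and> P \<noteq> F \<and> (\<exists>L\<in>Ls. P \<subseteq> L)})"

end

theory Submission
  imports Defs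
begin

text \<open>
  For a plane H call |H \<inter> S| - q its excess; by q-divisibility a nonzero excess is at
  least q. Counting incidences, the excesses of the q + 1 planes through a line M that meets S
  add up to q (|M \<inter> S| - 1), and those of the planes through a point of S add up to q (q - 1).
  Comparing the two sums shows that no line lies in S, that a line with q points of S makes S
  a 2-cylinder whose vertex is the missing point of that line, and that a line with q - 1
  points of S has two planes of excess 0 through it, from which one finds a line with q points
  of S.
\<close>

section \<open>Counting subspaces over a finite field\<close>

lemma card_field_ge_2: "2 \<le> CARD('a::{field,finite})"
proof -
  have "card {0::'a, 1} = 2" by simp
  moreover have "card {0::'a, 1} \<le> CARD('a)" by (rule card_mono) auto
  ultimately show ?thesis by simp
qed

lemma card_subspace:
  fixes W :: "('a::{field,finite}^'n) set"
  assumes "vec.subspace W"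
  shows "card W = CARD('a) ^ vec.dim W"
proof -
  obtain B where B: "B \<subseteq> W" "vec.independent B" "W \<subseteq> vec.span B" "card B = vec.dim W"
    using vec.basis_exists by blast
  have W: "W = vec.span B" using B assms vec.span_minimal by blast
  let ?coords = "PiE B (\<lambda>_. UNIV :: 'a set)"
  let ?comb = "\<lambda>u. \<Sum>v\<in>B. u v *s v"
  have "range ?comb = ?comb ` ?coords"
  proof (intro equalityI subsetI)
    fix x assume "x \<in> range ?comb"
    then obtain u where x: "x = ?comb u" by blast
    have "x = ?comb (restrict u B)" unfolding x by (intro sum.cong) auto
    moreover have "restrict u B \<in> ?coords" by simp
    ultimately show "x \<in> ?comb ` ?coords" by blast
  qed auto
  then have span: "vec.span B = ?comb ` ?coords"
    using vec.span_finite[of B] by simp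
  have "inj_on ?comb ?coords"
  proof (rule inj_onI)
    fix u u' assume u: "u \<in> ?coords" and u': "u' \<in> ?coords" and eq: "?comb u = ?comb u'"
    have sum0: "(\<Sum>v\<in>B. (u v - u' v) *s v) = 0"
      using eq by (simp add: vec.scale_left_diff_distrib sum_subtractf)
    have independent: "\<forall>c. (\<Sum>v\<in>B. c v *s v) = 0 \<longrightarrow> (\<forall>v\<in>B. c v = 0)"
      using B(2) vec.independent_explicit by blast
    have "u v = u' v" if "v \<in> B" for v using independent[rule_format, OF sum0 that] by simp
    with u u' show "u = u'" by (intro PiE_ext) auto
  qed
  then have "card W = card ?coords" unfolding W span by (rule card_image)
  then show ?thesis using B(4) by (simp add: card_PiE)
qed

lemma dim_span_insert:
  fixes U :: "('a::field^'n) set"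
  assumes "vec.subspace U" "w \<notin> U"
  shows "vec.dim (vec.span (insert w U)) = vec.dim U + 1"
proof -
  have "w \<notin> vec.span U" using assms vec.span_eq_iff by blast
  then show ?thesis by (simp add: vec.dim_insert)
qed

lemma subspace_eq_span_insert:
  fixes U X :: "('a::field^'n) set"
  assumes U: "vec.subspace U" and X: "vec.subspace X" "vec.dim X = vec.dim U + 1"
    and "U \<subseteq> X" "w \<in> X" "w \<notin> U"
  shows "X = vec.span (insert w U)"
proof -
  have "vec.span (insert w U) \<subseteq> X" using assms by (simp add: vec.span_minimal)
  from vec.subspace_dim_equal[OF vec.subspace_span X(1) this]
  show ?thesis using dim_span_insert[OF U \<open>w \<notin> U\<close>] X(2) by simp
qed

lemma subspaces_through_vector:
  fixes U :: "('a::field^'n) set"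
  assumes U: "vec.subspace U" and w: "w \<notin> U"
  shows "{X. vec.subspace X \<and> vec.dim X = vec.dim U + 1 \<and> U \<subseteq> X \<and> w \<in> X}
    = {vec.span (insert w U)}"
proof -
  have "U \<subseteq> vec.span (insert w U)" "w \<in> vec.span (insert w U)"
    using vec.span_superset[of "insert w U"] by blast+
  then show ?thesis
    using subspace_eq_span_insert[OF U _ _ _ _ w] dim_span_insert[OF U w] by auto
qed

lemma card_subspaces_between:
  fixes U W :: "('a::{field,finite}^'n) set"
  assumes U: "vec.subspace U" and W: "vec.subspace W" and "U \<subseteq> W"
  shows "card {X. vec.subspace X \<and> vec.dim X = vec.dim U + 1 \<and> U \<subseteq> X \<and> X \<subseteq> W}
      * (CARD('a) ^ (vec.dim U + 1) - CARD('a) ^ vec.dim U)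
    = CARD('a) ^ vec.dim W - CARD('a) ^ vec.dim U"
proof -
  let ?Xs = "{X. vec.subspace X \<and> vec.dim X = vec.dim U + 1 \<and> U \<subseteq> X \<and> X \<subseteq> W}"
  have span_in: "vec.span (insert w U) \<in> ?Xs" if w: "w \<in> W - U" for w
  proof -
    have "U \<subseteq> vec.span (insert w U)" using vec.span_superset[of "insert w U"] by blast
    moreover have "vec.span (insert w U) \<subseteq> W"
      using w \<open>U \<subseteq> W\<close> W by (simp add: vec.span_minimal)
    ultimately show ?thesis using dim_span_insert[OF U] w by simp
  qed
  have "w \<in> vec.span (insert w U)" for w by (simp add: vec.span_base)
  with span_in have partition: "W - U = (\<Union>X\<in>?Xs. X - U)" by blast
  have disjoint: "(X - U) \<inter> (Y - U) = {}" if X: "X \<in> ?Xs" and Y: "Y \<in> ?Xs" and "X \<noteq> Y"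
    for X Y
  proof (rule ccontr)
    assume "(X - U) \<inter> (Y - U) \<noteq> {}"
    then obtain w where "w \<in> X" "w \<in> Y" "w \<notin> U" by blast
    then have "X = vec.span (insert w U)" "Y = vec.span (insert w U)"
      using X Y subspace_eq_span_insert[OF U] by auto
    with \<open>X \<noteq> Y\<close> show False by simp
  qed
  have card_diff: "card (X - U) = CARD('a) ^ (vec.dim U + 1) - CARD('a) ^ vec.dim U"
    if "X \<in> ?Xs" for X
    using that card_subspace[OF U] card_subspace[of X] card_Diff_subset[of U X] by auto
  have "CARD('a) ^ vec.dim W - CARD('a) ^ vec.dim U = card (W - U)"
    using card_subspace[OF U] card_subspace[OF W] card_Diff_subset[OF _ \<open>U \<subseteq> W\<close>] by simp
  also have "\<dots> = (\<Sum>X\<in>?Xs. card (X - U))"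
    unfolding partition by (rule card_UN_disjoint) (use disjoint in auto)
  also have "\<dots> = card ?Xs * (CARD('a) ^ (vec.dim U + 1) - CARD('a) ^ vec.dim U)"
    using card_diff by simp
  finally show ?thesis by simp
qed

lemma card_subspaces_between_codim_2:
  fixes U W :: "('a::{field,finite}^'n) set"
  assumes "vec.subspace U" "vec.subspace W" "U \<subseteq> W" "vec.dim W = vec.dim U + 2"
  shows "card {X. vec.subspace X \<and> vec.dim X = vec.dim U + 1 \<and> U \<subseteq> X \<and> X \<subseteq> W}
    = CARD('a) + 1"
proof -
  define q :: nat where "q = CARD('a)"
  define a where "a = q ^ vec.dim U * (q - 1)"
  let ?Xs = "{X. vec.subspace X \<and> vec.dim X = vec.dim U + 1 \<and> U \<subseteq> X \<and> X \<subseteq> W}"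
  have "0 < a" using card_field_ge_2[where 'a='a] unfolding a_def q_def by simp
  have "q ^ (vec.dim U + 1) - q ^ vec.dim U = a"
    unfolding a_def by (simp add: algebra_simps diff_mult_distrib2)
  moreover have "q ^ (vec.dim U + 2) - q ^ vec.dim U = (q + 1) * a"
    unfolding a_def by (simp add: power_add algebra_simps diff_mult_distrib2)
  ultimately have "card ?Xs * a = (q + 1) * a"
    using card_subspaces_between[OF assms(1-3)] assms(4) unfolding q_def by simp
  with \<open>0 < a\<close> have "card ?Xs = q + 1" using mult_right_cancel[of a "card ?Xs" "q + 1"] by simp
  then show ?thesis unfolding q_def .
qed

section \<open>Incidences in PG(3,q)\<close>

definition planes_through :: "('a::field^4) set \<Rightarrow> ('a^4) set set" where
  "planes_through W = {H. pg_plane H \<and> W \<subseteq> H}"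

definition lines_through :: "('a::field^4) set \<Rightarrow> ('a^4) set set" where
  "lines_through W = {M. pg_line M \<and> W \<subseteq> M}"

lemma card_points_on_line:
  fixes L :: "('a::{field,finite}^4) set"
  assumes "pg_line L"
  shows "card {P. pg_point P \<and> P \<subseteq> L} = CARD('a) + 1"
proof -
  have "{P. pg_point P \<and> P \<subseteq> L}
      = {X. vec.subspace X \<and> vec.dim X = vec.dim {0::'a^4} + 1 \<and> {0} \<subseteq> X \<and> X \<subseteq> L}"
    unfolding pg_sub_def by (auto simp: vec.subspace_0)
  then show ?thesis
    using card_subspaces_between_codim_2[of "{0}" L] assms
    unfolding pg_sub_def by (simp add: vec.subspace_0)
qed

lemma card_planes_through_line:
  fixes L :: "('a::{field,finite}^4) set"
  assumes "pg_line L"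
  shows "card (planes_through L) = CARD('a) + 1"
proof -
  have "planes_through L
      = {X. vec.subspace X \<and> vec.dim X = vec.dim L + 1 \<and> L \<subseteq> X \<and> X \<subseteq> UNIV}"
    using assms unfolding planes_through_def pg_sub_def by auto
  then show ?thesis
    using card_subspaces_between_codim_2[of L UNIV] assms
    unfolding pg_sub_def by (simp add: card_cart_basis)
qed

lemma card_lines_through_point_in_plane:
  fixes P H :: "('a::{field,finite}^4) set"
  assumes "pg_point P" "pg_plane H" "P \<subseteq> H"
  shows "card {M \<in> lines_through P. M \<subseteq> H} = CARD('a) + 1"
proof -
  have "{M \<in> lines_through P. M \<subseteq> H}
      = {X. vec.subspace X \<and> vec.dim X = vec.dim P + 1 \<and> P \<subseteq> X \<and> X \<subseteq> H}"
    using assms unfolding lines_through_def pg_sub_def by auto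
  then show ?thesis
    using card_subspaces_between_codim_2[of P H] assms unfolding pg_sub_def by simp
qed

lemma pg_point_span_singleton:
  fixes v :: "'a::field^4"
  assumes "v \<noteq> 0"
  shows "pg_point (vec.span {v})"
  using dim_span_insert[of "{0}" v] assms unfolding pg_sub_def
  by (simp add: vec.subspace_0 vec.span_insert_0)

lemma pg_point_eq_span:
  fixes P :: "('a::field^4) set"
  assumes "pg_point P" "v \<in> P" "v \<noteq> 0"
  shows "P = vec.span {v}"
proof -
  have "P = vec.span (insert v {0})"
    using subspace_eq_span_insert[of "{0}" P v] assms unfolding pg_sub_def
    by (auto simp: vec.subspace_0)
  then show ?thesis by (simp add: insert_commute vec.span_insert_0)
qed

lemma pg_point_subset_iff:
  fixes P H :: "('a::field^4) set"
  assumes "pg_point P" "v \<in> P" "v \<noteq> 0" "vec.subspace H"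
  shows "P \<subseteq> H \<longleftrightarrow> v \<in> H"
  using pg_point_eq_span[OF assms(1-3)] assms(2,4) vec.span_minimal[of "{v}" H] by auto

lemma pg_point_subset_eq:
  fixes P Q :: "('a::field^4) set"
  assumes "pg_point P" "pg_point Q" "Q \<subseteq> P"
  shows "Q = P"
  using assms vec.subspace_dim_equal[of Q P] unfolding pg_sub_def by simp

lemma subspaces_through_point:
  fixes U Q :: "('a::field^4) set"
  assumes U: "vec.subspace U" and Q: "pg_point Q" "\<not> Q \<subseteq> U"
  shows "\<exists>X. {Y. pg_sub (vec.dim U + 1) Y \<and> U \<subseteq> Y \<and> Q \<subseteq> Y} = {X}"
proof -
  obtain w where w: "w \<in> Q" "w \<notin> U" using Q(2) by blast
  then have "w \<noteq> 0" using vec.subspace_0[OF U] by auto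
  then have "Q \<subseteq> Y \<longleftrightarrow> w \<in> Y" if "vec.subspace Y" for Y
    using pg_point_subset_iff[OF Q(1) w(1)] that by simp
  then have "{Y. pg_sub (vec.dim U + 1) Y \<and> U \<subseteq> Y \<and> Q \<subseteq> Y}
      = {Y. vec.subspace Y \<and> vec.dim Y = vec.dim U + 1 \<and> U \<subseteq> Y \<and> w \<in> Y}"
    unfolding pg_sub_def by auto
  then show ?thesis using subspaces_through_vector[OF U w(2)] by auto
qed

lemma lines_through_two_points:
  fixes P Q :: "('a::field^4) set"
  assumes "pg_point P" "pg_point Q" "P \<noteq> Q"
  obtains M where "{M \<in> lines_through P. Q \<subseteq> M} = {M}"
proof -
  have "\<not> Q \<subseteq> P" using pg_point_subset_eq assms by blast
  moreover have P: "vec.subspace P" "vec.dim P + 1 = 2" using assms(1) unfolding pg_sub_def by auto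
  moreover have "{M \<in> lines_through P. Q \<subseteq> M} = {Y. pg_sub (vec.dim P + 1) Y \<and> P \<subseteq> Y \<and> Q \<subseteq> Y}"
    unfolding lines_through_def P(2) by auto
  ultimately show ?thesis using subspaces_through_point[of P Q] assms(2) that by auto
qed

lemma planes_through_line_and_point:
  fixes L X :: "('a::field^4) set"
  assumes "pg_line L" "pg_point X" "\<not> X \<subseteq> L"
  obtains H where "{H \<in> planes_through L. X \<subseteq> H} = {H}"
proof -
  have L: "vec.subspace L" "vec.dim L + 1 = 3" using assms(1) unfolding pg_sub_def by auto
  moreover have "{H \<in> planes_through L. X \<subseteq> H} = {Y. pg_sub (vec.dim L + 1) Y \<and> L \<subseteq> Y \<and> X \<subseteq> Y}"
    unfolding planes_through_def L(2) by auto
  ultimately show ?thesis using subspaces_through_point[of L X] assms(2,3) that by auto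
qed

lemma ex_line_through_points:
  fixes P Q :: "('a::field^4) set"
  assumes "pg_point P" "pg_point Q" "P \<noteq> Q"
  obtains M where "pg_line M" "P \<subseteq> M" "Q \<subseteq> M"
proof -
  obtain M where "{M \<in> lines_through P. Q \<subseteq> M} = {M}"
    using lines_through_two_points[OF assms] .
  then have "M \<in> {M \<in> lines_through P. Q \<subseteq> M}" by simp
  then show ?thesis using that unfolding lines_through_def by blast
qed

lemma line_through_points_unique:
  fixes P Q M M' :: "('a::field^4) set"
  assumes "pg_point P" "pg_point Q" "P \<noteq> Q"
    and "pg_line M" "P \<subseteq> M" "Q \<subseteq> M" and "pg_line M'" "P \<subseteq> M'" "Q \<subseteq> M'"
  shows "M = M'"
proof -
  obtain M0 where M0: "{M \<in> lines_through P. Q \<subseteq> M} = {M0}"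
    using lines_through_two_points[OF assms(1-3)] .
  have "M \<in> {M \<in> lines_through P. Q \<subseteq> M}" "M' \<in> {M \<in> lines_through P. Q \<subseteq> M}"
    using assms(4-) unfolding lines_through_def by simp_all
  then show ?thesis unfolding M0 by simp
qed

lemma line_through_points_subset:
  fixes P Q M H :: "('a::field^4) set"
  assumes P: "pg_point P" and "pg_point Q" "P \<noteq> Q"
    and M: "pg_line M" "P \<subseteq> M" "Q \<subseteq> M" and H: "vec.subspace H" "P \<subseteq> H" "Q \<subseteq> H"
  shows "M \<subseteq> H"
proof -
  have "\<not> Q \<subseteq> P" using pg_point_subset_eq assms by blast
  then obtain w where w: "w \<in> Q" "w \<notin> P" by blast
  have "M = vec.span (insert w P)"
    using subspace_eq_span_insert[of P M w] P M w unfolding pg_sub_def by auto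
  then show ?thesis using H w(1) vec.span_minimal[of "insert w P" H] by auto
qed

lemma plane_through_line_and_point_unique:
  fixes L X H H' :: "('a::field^4) set"
  assumes "pg_line L" "pg_point X" "\<not> X \<subseteq> L"
    and "pg_plane H" "L \<subseteq> H" "X \<subseteq> H" and "pg_plane H'" "L \<subseteq> H'" "X \<subseteq> H'"
  shows "H = H'"
proof -
  obtain H0 where H0: "{H \<in> planes_through L. X \<subseteq> H} = {H0}"
    using planes_through_line_and_point[OF assms(1-3)] .
  have "H \<in> {H \<in> planes_through L. X \<subseteq> H}" "H' \<in> {H \<in> planes_through L. X \<subseteq> H}"
    using assms(4-) unfolding planes_through_def by simp_all
  then show ?thesis unfolding H0 by simp
qed

lemma card_planes_through_line_containing:
  fixes M P :: "('a::{field,finite}^4) set"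
  assumes "pg_line M" "pg_point P"
  shows "card {H \<in> planes_through M. P \<subseteq> H} = (if P \<subseteq> M then CARD('a) + 1 else 1)"
proof (cases "P \<subseteq> M")
  case True
  then have "{H \<in> planes_through M. P \<subseteq> H} = planes_through M"
    unfolding planes_through_def by auto
  with True show ?thesis using card_planes_through_line[OF assms(1)] by simp
next
  case False
  then obtain H where "{H \<in> planes_through M. P \<subseteq> H} = {H}"
    using planes_through_line_and_point[OF assms] by blast
  with False show ?thesis by simp
qed

lemma card_lines_through_point_containing:
  fixes P Q :: "('a::field^4) set"
  assumes "pg_point P" "pg_point Q"
  shows "card {M \<in> lines_through P. Q \<subseteq> M} = (if Q = P then card (lines_through P) else 1)"
proof (cases "Q = P")
  case True
  then have "{M \<in> lines_through P. Q \<subseteq> M} = lines_through P"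
    unfolding lines_through_def by auto
  with True show ?thesis by simp
next
  case False
  then obtain M where "{M \<in> lines_through P. Q \<subseteq> M} = {M}"
    using lines_through_two_points[OF assms] by metis
  with False show ?thesis by simp
qed

lemma plane_meets_line:
  fixes H L :: "('a::field^4) set"
  assumes H: "pg_plane H" and L: "pg_line L"
  obtains P where "pg_point P" "P \<subseteq> H" "P \<subseteq> L"
proof -
  have "vec.dim {x + y |x y. x \<in> H \<and> y \<in> L} \<le> 4"
    using vec.dim_subset_UNIV[of "{x + y |x y. x \<in> H \<and> y \<in> L}"]
    by (simp add: vec.dimension_def card_cart_basis)
  then have "vec.dim (H \<inter> L) \<ge> 1"
    using vec.dim_sums_Int[of H L] H L unfolding pg_sub_def by simp
  then have "\<not> H \<inter> L \<subseteq> {0}" using vec.dim_eq_0[of "H \<inter> L"] by linarith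
  then obtain v where v: "v \<in> H" "v \<in> L" "v \<noteq> 0" by blast
  then have "vec.span {v} \<subseteq> H" "vec.span {v} \<subseteq> L"
    using H L vec.span_minimal[of "{v}"] unfolding pg_sub_def by auto
  then show ?thesis using that pg_point_span_singleton[OF v(3)] by blast
qed

section \<open>q-divisible sets of q^2 points\<close>

lemma card_nonzero_le_sum:
  fixes f :: "'b \<Rightarrow> nat"
  assumes "finite A" "\<And>x. x \<in> A \<Longrightarrow> f x \<noteq> 0 \<Longrightarrow> k \<le> f x"
  shows "k * card {x \<in> A. f x \<noteq> 0} \<le> sum f A"
proof -
  have "k * card {x \<in> A. f x \<noteq> 0} = (\<Sum>x\<in>{x \<in> A. f x \<noteq> 0}. k)" by simp
  also have "\<dots> \<le> (\<Sum>x\<in>{x \<in> A. f x \<noteq> 0}. f x)" using assms(2) by (intro sum_mono) auto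
  also have "\<dots> \<le> sum f A" using assms(1) by (intro sum_mono2) auto
  finally show ?thesis .
qed

locale divisible_point_set =
  fixes S :: "('a::{field,finite}^4) set set" and q :: nat
  assumes q_def: "q = CARD('a)"
    and points: "\<forall>P\<in>S. pg_point P"
    and card_S: "card S = q ^ 2"
    and divisible: "q_divisible q S"
begin

text \<open>Only used for planes through a point of S, where |H \<inter> S| \<ge> q, so the truncated
  subtraction is exact.\<close>

abbreviation excess :: "('a^4) set \<Rightarrow> nat" where
  "excess H \<equiv> meet_card S H - q"

lemma q_ge_2: "2 \<le> q"
  using card_field_ge_2[where 'a='a] q_def by simp

lemma meet_card_mono: "W \<subseteq> W' \<Longrightarrow> meet_card S W \<le> meet_card S W'"
  unfolding meet_card_def by (rule card_mono) auto

lemma meet_card_pos_iff: "0 < meet_card S W \<longleftrightarrow> (\<exists>P\<in>S. P \<subseteq> W)"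
  unfolding meet_card_def by (auto simp: card_gt_0_iff)

lemma q_dvd_meet_card_plane:
  assumes "pg_plane H"
  shows "q dvd meet_card S H"
proof -
  have "meet_card S H mod q = card S mod q" using divisible assms unfolding q_divisible_def by blast
  then show ?thesis using card_S by (simp add: dvd_eq_mod_eq_0 power2_eq_square)
qed

lemma q_le_meet_card_plane:
  assumes "pg_plane H" "P \<in> S" "P \<subseteq> H"
  shows "q \<le> meet_card S H"
  using q_dvd_meet_card_plane[OF assms(1)] meet_card_pos_iff[of H] assms(2,3)
  by (auto intro: dvd_imp_le)

lemma q_le_excess:
  assumes "pg_plane H" "excess H \<noteq> 0"
  shows "q \<le> excess H"
proof -
  have "q dvd excess H" using q_dvd_meet_card_plane[OF assms(1)] by (simp add: dvd_diff_nat)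
  with assms(2) show ?thesis by (simp add: dvd_imp_le)
qed

lemma sum_meet_card_planes_through_line:
  assumes M: "pg_line M"
  shows "(\<Sum>H\<in>planes_through M. meet_card S H) = q * meet_card S M + q ^ 2"
proof -
  have "(\<Sum>H\<in>planes_through M. meet_card S H)
      = (\<Sum>H\<in>planes_through M. \<Sum>P\<in>{P \<in> S. P \<subseteq> H}. 1)"
    unfolding meet_card_def by simp
  also have "\<dots> = (\<Sum>P\<in>S. card {H \<in> planes_through M. P \<subseteq> H})"
    by (subst sum.swap_restrict) simp_all
  also have "\<dots> = (\<Sum>P\<in>S. 1 + (if P \<subseteq> M then q else 0))"
    using card_planes_through_line_containing[OF M] points q_def by (intro sum.cong) auto
  also have "\<dots> = q ^ 2 + q * meet_card S M"
    unfolding sum.distrib meet_card_def by (simp add: sum.inter_filter[symmetric] card_S)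
  finally show ?thesis by simp
qed

lemma sum_excess_planes_through_line:
  assumes M: "pg_line M" and "0 < meet_card S M"
  shows "(\<Sum>H\<in>planes_through M. excess H) = q * (meet_card S M - 1)"
proof -
  obtain P where "P \<in> S" "P \<subseteq> M" using assms(2) meet_card_pos_iff by blast
  then have "q \<le> meet_card S H" if "H \<in> planes_through M" for H
    using that q_le_meet_card_plane unfolding planes_through_def by blast
  then have "(\<Sum>H\<in>planes_through M. excess H)
      = (\<Sum>H\<in>planes_through M. meet_card S H) - (\<Sum>H\<in>planes_through M. q)"
    by (intro sum_subtractf_nat) auto
  also have "\<dots> = q * meet_card S M + q ^ 2 - (q + 1) * q"
    using sum_meet_card_planes_through_line[OF M] card_planes_through_line[OF M] q_def by simp
  also have "\<dots> = q * (meet_card S M - 1)"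
    using assms(2) by (simp add: power2_eq_square algebra_simps diff_mult_distrib2)
  finally show ?thesis .
qed

lemma sum_meet_card_lines_through_point:
  assumes P: "P \<in> S"
  shows "(\<Sum>M\<in>lines_through P. meet_card S M) = card (lines_through P) + (q ^ 2 - 1)"
proof -
  have "(\<Sum>M\<in>lines_through P. meet_card S M)
      = (\<Sum>M\<in>lines_through P. \<Sum>Q\<in>{Q \<in> S. Q \<subseteq> M}. 1)"
    unfolding meet_card_def by simp
  also have "\<dots> = (\<Sum>Q\<in>S. card {M \<in> lines_through P. Q \<subseteq> M})"
    by (subst sum.swap_restrict) simp_all
  also have "\<dots> = (\<Sum>Q\<in>S. if Q = P then card (lines_through P) else 1)"
  proof (rule sum.cong[OF refl])
    fix Q assume "Q \<in> S"
    with P points show "card {M \<in> lines_through P. Q \<subseteq> M} = (if Q = P then card (lines_through P) else 1)"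
      by (simp add: card_lines_through_point_containing)
  qed
  also have "\<dots> = card (lines_through P) + (q ^ 2 - 1)"
    using P card_S by (simp add: sum.remove)
  finally show ?thesis .
qed

lemma sum_excess_planes_through_point:
  assumes P: "P \<in> S"
  shows "(\<Sum>H\<in>planes_through P. excess H) = q * (q - 1)"
proof -
  have pP: "pg_point P" using points P by blast
  have meets: "0 < meet_card S M" if "M \<in> lines_through P" for M
    using that P meet_card_pos_iff unfolding lines_through_def by blast
  have "(\<Sum>M\<in>lines_through P. \<Sum>H\<in>{H \<in> planes_through P. M \<subseteq> H}. excess H)
      = (\<Sum>H\<in>planes_through P. card {M \<in> lines_through P. M \<subseteq> H} * excess H)"
    by (subst sum.swap_restrict) simp_all
  also have "\<dots> = (q + 1) * (\<Sum>H\<in>planes_through P. excess H)"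
    unfolding sum_distrib_left
    by (intro sum.cong) (auto simp: card_lines_through_point_in_plane[OF pP] q_def planes_through_def)
  finally have "(q + 1) * (\<Sum>H\<in>planes_through P. excess H)
      = (\<Sum>M\<in>lines_through P. \<Sum>H\<in>{H \<in> planes_through P. M \<subseteq> H}. excess H)" ..
  also have "\<dots> = (\<Sum>M\<in>lines_through P. q * (meet_card S M - 1))"
  proof (rule sum.cong[OF refl])
    fix M assume M: "M \<in> lines_through P"
    then have "{H \<in> planes_through P. M \<subseteq> H} = planes_through M"
      unfolding planes_through_def lines_through_def by auto
    with M show "(\<Sum>H\<in>{H \<in> planes_through P. M \<subseteq> H}. excess H) = q * (meet_card S M - 1)"
      using sum_excess_planes_through_line meets unfolding lines_through_def by simp
  qed
  also have "\<dots> = q * ((\<Sum>M\<in>lines_through P. meet_card S M) - card (lines_through P))"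
  proof -
    have "(\<Sum>M\<in>lines_through P. meet_card S M - 1)
        = (\<Sum>M\<in>lines_through P. meet_card S M) - card (lines_through P)"
      using meets by (subst sum_subtractf_nat) (auto simp: Suc_le_eq)
    then show ?thesis by (simp add: sum_distrib_left[symmetric])
  qed
  also have "\<dots> = q * (q ^ 2 - 1)" using sum_meet_card_lines_through_point[OF P] by simp
  also have "\<dots> = (q + 1) * (q * (q - 1))"
    by (simp add: power2_eq_square algebra_simps diff_mult_distrib2)
  finally show ?thesis by (metis add_eq_0_iff_both_eq_0 mult_left_cancel one_neq_zero)
qed

lemma sum_excess_planes_through_point_off_line:
  assumes P: "P \<in> S" and M: "pg_line M" "P \<subseteq> M"
  shows "(\<Sum>H\<in>planes_through P - planes_through M. excess H) = q * (q - meet_card S M)"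
proof -
  have meets: "0 < meet_card S M" using P M(2) meet_card_pos_iff by blast
  have "planes_through M \<subseteq> planes_through P" using M(2) unfolding planes_through_def by auto
  then have "q * (q - 1) = (\<Sum>H\<in>planes_through P - planes_through M. excess H) + q * (meet_card S M - 1)"
    using sum_excess_planes_through_point[OF P] sum_excess_planes_through_line[OF M(1) meets]
    by (simp add: sum.subset_diff)
  moreover have "q - meet_card S M = (q - 1) - (meet_card S M - 1)" using meets by simp
  ultimately show ?thesis by (simp add: diff_mult_distrib2)
qed

lemma card_heavy_planes_through_line:
  assumes "pg_line M" "0 < meet_card S M"
  shows "card {H \<in> planes_through M. excess H \<noteq> 0} \<le> meet_card S M - 1"
proof -
  have "q * card {H \<in> planes_through M. excess H \<noteq> 0} \<le> (\<Sum>H\<in>planes_through M. excess H)"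
    using q_le_excess by (intro card_nonzero_le_sum) (auto simp: planes_through_def)
  then show ?thesis using sum_excess_planes_through_line[OF assms] q_ge_2 by simp
qed

lemma meet_card_line_le:
  assumes L: "pg_line L"
  shows "meet_card S L \<le> q"
proof (rule ccontr)
  assume "\<not> meet_card S L \<le> q"
  moreover have "meet_card S L \<le> q + 1"
    using card_points_on_line[OF L] points q_def
      card_mono[of "{P. pg_point P \<and> P \<subseteq> L}" "{P \<in> S. P \<subseteq> L}"]
    unfolding meet_card_def by auto
  ultimately have full: "meet_card S L = q + 1" by simp
  have "excess H \<noteq> 0" if "H \<in> planes_through L" for H
    using meet_card_mono[of L H] that full unfolding planes_through_def by auto
  then have "{H \<in> planes_through L. excess H \<noteq> 0} = planes_through L" by auto
  then show False
    using card_heavy_planes_through_line[OF L] full card_planes_through_line[OF L] q_def by simp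
qed

lemma ex_point_on_line_not_in_S:
  assumes L: "pg_line L" "meet_card S L = q"
  obtains R where "pg_point R" "R \<subseteq> L" "R \<notin> S"
proof -
  have "\<not> {P. pg_point P \<and> P \<subseteq> L} \<subseteq> S"
  proof
    assume "{P. pg_point P \<and> P \<subseteq> L} \<subseteq> S"
    then have "card {P. pg_point P \<and> P \<subseteq> L} \<le> meet_card S L"
      unfolding meet_card_def by (intro card_mono) auto
    then show False using card_points_on_line[OF L(1)] L(2) q_def by simp
  qed
  then show ?thesis using that by blast
qed

lemma points_on_line_in_S:
  assumes M: "pg_line M" "meet_card S M = q" and R: "pg_point R" "R \<subseteq> M" "R \<notin> S"
    and P: "pg_point P" "P \<subseteq> M" "P \<noteq> R"
  shows "P \<in> S"
proof -
  let ?points = "{P. pg_point P \<and> P \<subseteq> M}"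
  have "{P \<in> S. P \<subseteq> M} \<subseteq> ?points - {R}" using points R(3) by auto
  moreover have "card (?points - {R}) = card {P \<in> S. P \<subseteq> M}"
    using card_points_on_line[OF M(1)] R M(2) q_def unfolding meet_card_def by simp
  ultimately have "{P \<in> S. P \<subseteq> M} = ?points - {R}" by (intro card_subset_eq) auto
  then show ?thesis using P by blast
qed

lemma excess_eq_0_off_line:
  assumes L: "pg_line L" "meet_card S L = q" and P: "P \<in> S" "P \<subseteq> L"
    and H: "pg_plane H" "P \<subseteq> H" "\<not> L \<subseteq> H"
  shows "excess H = 0"
proof -
  have "(\<Sum>H\<in>planes_through P - planes_through L. excess H) = 0"
    using sum_excess_planes_through_point_off_line[OF P(1) L(1) P(2)] L(2) by simp
  moreover have "H \<in> planes_through P - planes_through L" using H unfolding planes_through_def by simp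
  ultimately show ?thesis by simp
qed

lemma heavy_plane_contains_missing_point:
  assumes L: "pg_line L" "meet_card S L = q" and R: "pg_point R" "R \<subseteq> L" "R \<notin> S"
    and H: "pg_plane H" "excess H \<noteq> 0"
  shows "R \<subseteq> H"
proof -
  obtain P where P: "pg_point P" "P \<subseteq> H" "P \<subseteq> L" using plane_meets_line[OF H(1) L(1)] .
  show ?thesis
  proof (cases "P = R")
    case False
    then have "P \<in> S" using points_on_line_in_S[OF L R P(1,3)] by blast
    then have "L \<subseteq> H" using excess_eq_0_off_line[OF L _ P(3) H(1) P(2)] H(2) by blast
    with R(2) show ?thesis by blast
  qed (use P in simp)
qed

lemma meet_card_line_through_missing_point:
  assumes L: "pg_line L" "meet_card S L = q" and R: "pg_point R" "R \<subseteq> L" "R \<notin> S"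
    and Q: "Q \<in> S" and M: "pg_line M" "R \<subseteq> M" "Q \<subseteq> M"
  shows "meet_card S M = q"
proof -
  have Q': "pg_point Q" "R \<noteq> Q" using points Q R(3) by auto
  have "excess H = 0" if "H \<in> planes_through Q - planes_through M" for H
  proof (rule ccontr)
    assume "excess H \<noteq> 0"
    moreover have H: "pg_plane H" "Q \<subseteq> H" "\<not> M \<subseteq> H"
      using that unfolding planes_through_def by auto
    ultimately have "R \<subseteq> H" using heavy_plane_contains_missing_point[OF L R] by blast
    then have "M \<subseteq> H"
      using line_through_points_subset[OF R(1) Q' M(1) M(2,3)] H(1,2) unfolding pg_sub_def by blast
    with H(3) show False ..
  qed
  then have "q * (q - meet_card S M) = 0"
    using sum_excess_planes_through_point_off_line[OF Q M(1,3)] by simp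
  then show ?thesis using q_ge_2 meet_card_line_le[OF M(1)] by simp
qed

lemma two_cylinder_if_line_meets_q:
  assumes L: "pg_line L" "meet_card S L = q"
  shows "two_cylinder q S"
proof -
  obtain R where R: "pg_point R" "R \<subseteq> L" "R \<notin> S" using ex_point_on_line_not_in_S[OF L] .
  define Ls where "Ls = {M \<in> lines_through R. \<exists>Q\<in>S. Q \<subseteq> M}"
  have Ls: "pg_line M" "R \<subseteq> M" "meet_card S M = q" if "M \<in> Ls" for M
    using that meet_card_line_through_missing_point[OF L R]
    unfolding Ls_def lines_through_def by auto
  have S_eq: "S = {P. pg_point P \<and> P \<noteq> R \<and> (\<exists>M\<in>Ls. P \<subseteq> M)}"
  proof (intro equalityI subsetI)
    fix P assume P: "P \<in> S"
    then have "pg_point P" "P \<noteq> R" using points R(3) by auto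
    moreover obtain M where "pg_line M" "R \<subseteq> M" "P \<subseteq> M"
      using ex_line_through_points[OF R(1) \<open>pg_point P\<close>] \<open>P \<noteq> R\<close> by metis
    ultimately show "P \<in> {P. pg_point P \<and> P \<noteq> R \<and> (\<exists>M\<in>Ls. P \<subseteq> M)}"
      using P unfolding Ls_def lines_through_def by auto
  next
    fix P assume "P \<in> {P. pg_point P \<and> P \<noteq> R \<and> (\<exists>M\<in>Ls. P \<subseteq> M)}"
    then obtain M where M: "M \<in> Ls" and P: "pg_point P" "P \<subseteq> M" "P \<noteq> R" by blast
    show "P \<in> S" using points_on_line_in_S[OF Ls(1,3)[OF M] R(1) Ls(2)[OF M] R(3) P] .
  qed
  have disjoint: "{P \<in> S. P \<subseteq> M} \<inter> {P \<in> S. P \<subseteq> M'} = {}"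
    if M: "M \<in> Ls" "M' \<in> Ls" "M \<noteq> M'" for M M'
  proof (rule ccontr)
    assume "{P \<in> S. P \<subseteq> M} \<inter> {P \<in> S. P \<subseteq> M'} \<noteq> {}"
    then obtain P where P: "P \<in> S" "P \<subseteq> M" "P \<subseteq> M'" by blast
    then have "pg_point P" "R \<noteq> P" using points R(3) by auto
    then have "M = M'"
      using line_through_points_unique[OF R(1)] Ls(1,2)[OF M(1)] Ls(1,2)[OF M(2)] P(2,3) by blast
    with M(3) show False ..
  qed
  have "S = (\<Union>M\<in>Ls. {P \<in> S. P \<subseteq> M})" using S_eq by blast
  then have "q ^ 2 = card (\<Union>M\<in>Ls. {P \<in> S. P \<subseteq> M})" using card_S by simp
  also have "\<dots> = (\<Sum>M\<in>Ls. meet_card S M)"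
    unfolding meet_card_def by (rule card_UN_disjoint) (use disjoint in auto)
  also have "\<dots> = card Ls * q" using Ls by simp
  finally have "card Ls = q" using q_ge_2 by (simp add: power2_eq_square)
  then show ?thesis
    unfolding two_cylinder_def using R(1) Ls S_eq by blast
qed

lemma two_light_planes_through_line:
  assumes L: "pg_line L" "meet_card S L = q - 1"
  obtains H H' where "H \<in> planes_through L" "H' \<in> planes_through L" "H \<noteq> H'"
    "excess H = 0" "excess H' = 0"
proof -
  let ?heavy = "{H \<in> planes_through L. excess H \<noteq> 0}"
  let ?light = "{H \<in> planes_through L. excess H = 0}"
  have "card ?heavy \<le> q - 2"
    using card_heavy_planes_through_line[OF L(1)] L(2) q_ge_2 by simp
  moreover have "?light = planes_through L - ?heavy" by auto
  then have "card ?light = card (planes_through L) - card ?heavy"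
    using card_Diff_subset[of ?heavy "planes_through L"] by simp
  ultimately have "2 \<le> card ?light"
    using card_planes_through_line[OF L(1)] q_def q_ge_2 by linarith
  then have "\<not> (\<forall>H\<in>?light. \<forall>H'\<in>?light. H = H')"
    using card_le_Suc0_iff_eq[of ?light] by auto
  then show ?thesis using that by blast
qed

lemma point_off_line_in_plane:
  assumes L: "pg_line L" "0 < meet_card S L" "meet_card S L < q" and H: "pg_plane H" "L \<subseteq> H"
  obtains X where "X \<in> S" "X \<subseteq> H" "\<not> X \<subseteq> L"
proof -
  obtain P where P: "P \<in> S" "P \<subseteq> L" using L(2) meet_card_pos_iff by blast
  have "P \<subseteq> H" using P(2) H(2) by (rule order_trans)
  with L(3) have "meet_card S L < meet_card S H"
    using q_le_meet_card_plane[OF H(1) P(1)] by simp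
  have "\<not> {X \<in> S. X \<subseteq> H} \<subseteq> {X \<in> S. X \<subseteq> L}"
  proof
    assume "{X \<in> S. X \<subseteq> H} \<subseteq> {X \<in> S. X \<subseteq> L}"
    then have "meet_card S H \<le> meet_card S L" unfolding meet_card_def by (rule card_mono[rotated]) simp
    with \<open>meet_card S L < meet_card S H\<close> show False by simp
  qed
  then show ?thesis using that by blast
qed

lemma heavy_plane_off_line:
  assumes L: "pg_line L" and light: "pg_plane \<pi>" "L \<subseteq> \<pi>" "excess \<pi> = 0"
    and X: "X \<in> S" "X \<subseteq> \<pi>" "\<not> X \<subseteq> L" and P: "P \<in> S" "P \<subseteq> L"
  obtains H where "pg_plane H" "P \<subseteq> H" "X \<subseteq> H" "\<not> L \<subseteq> H" "excess H \<noteq> 0"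
proof -
  have pX: "pg_point X" and pP: "pg_point P" and "P \<noteq> X" using points X P by auto
  obtain M where M: "pg_line M" "P \<subseteq> M" "X \<subseteq> M"
    using ex_line_through_points[OF pP pX \<open>P \<noteq> X\<close>] .
  have "card {P, X} \<le> meet_card S M"
    unfolding meet_card_def using M P X by (intro card_mono) auto
  then have "2 \<le> meet_card S M" using \<open>P \<noteq> X\<close> by simp
  then have "(\<Sum>H\<in>planes_through M. excess H) \<noteq> 0"
    using sum_excess_planes_through_line[OF M(1)] q_ge_2 by simp
  then obtain H where H: "H \<in> planes_through M" "excess H \<noteq> 0" by (meson sum.neutral)
  have "\<not> L \<subseteq> H"
  proof
    assume "L \<subseteq> H"
    then have "H = \<pi>"
      using plane_through_line_and_point_unique[OF L pX X(3)] H(1) M(3) light(1,2) X(2)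
      unfolding planes_through_def by blast
    with H(2) light(3) show False by simp
  qed
  then show ?thesis using that H M unfolding planes_through_def by blast
qed

lemma heavy_plane_off_line_unique:
  assumes L: "pg_line L" "meet_card S L = q - 1" and P: "P \<in> S" "P \<subseteq> L"
    and H: "pg_plane H" "P \<subseteq> H" "\<not> L \<subseteq> H" "excess H \<noteq> 0"
    and H': "pg_plane H'" "P \<subseteq> H'" "\<not> L \<subseteq> H'" "excess H' \<noteq> 0"
  shows "H = H'"
proof -
  let ?off = "planes_through P - planes_through L"
  have "q * card {H \<in> ?off. excess H \<noteq> 0} \<le> (\<Sum>H\<in>?off. excess H)"
    using q_le_excess by (intro card_nonzero_le_sum) (auto simp: planes_through_def)
  also have "\<dots> = q * 1"
    using sum_excess_planes_through_point_off_line[OF P(1) L(1) P(2)] L(2) q_ge_2 by simp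
  finally have "card {H \<in> ?off. excess H \<noteq> 0} \<le> 1" using q_ge_2 by simp
  moreover have "H \<in> {H \<in> ?off. excess H \<noteq> 0}" "H' \<in> {H \<in> ?off. excess H \<noteq> 0}"
    using H H' unfolding planes_through_def by auto
  ultimately show ?thesis using card_le_Suc0_iff_eq[of "{H \<in> ?off. excess H \<noteq> 0}"] by auto
qed

lemma meet_card_lt_if_heavy_planes_cover:
  assumes L: "pg_line L" and N: "pg_line N" "0 < meet_card S N"
    and cover: "\<And>P. P \<in> S \<Longrightarrow> P \<subseteq> L \<Longrightarrow>
      \<exists>H\<in>planes_through N. P \<subseteq> H \<and> \<not> L \<subseteq> H \<and> excess H \<noteq> 0"
  shows "meet_card S L < meet_card S N"
proof -
  define B where "B = {H \<in> planes_through N. \<not> L \<subseteq> H \<and> excess H \<noteq> 0}"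
  have "\<forall>P\<in>{P \<in> S. P \<subseteq> L}. \<exists>H. H \<in> B \<and> P \<subseteq> H"
    using cover unfolding B_def by blast
  then obtain f where f: "\<forall>P\<in>{P \<in> S. P \<subseteq> L}. f P \<in> B \<and> P \<subseteq> f P"
    by (rule bchoice[elim_format]) blast
  have "inj_on f {P \<in> S. P \<subseteq> L}"
  proof (rule inj_onI, rule ccontr)
    fix P P' assume P: "P \<in> {P \<in> S. P \<subseteq> L}" and P': "P' \<in> {P \<in> S. P \<subseteq> L}"
      and "f P = f P'" "P \<noteq> P'"
    have fP: "f P \<in> B" "P \<subseteq> f P" "P' \<subseteq> f P"
      using f P P' \<open>f P = f P'\<close> by auto
    then have "vec.subspace (f P)" unfolding B_def planes_through_def pg_sub_def by simp
    moreover have "pg_point P" "pg_point P'" using P P' points by auto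
    ultimately have "L \<subseteq> f P"
      using line_through_points_subset[OF _ _ \<open>P \<noteq> P'\<close> L] P P' fP(2,3) by blast
    with fP(1) show False unfolding B_def by blast
  qed
  then have "meet_card S L \<le> card B"
    unfolding meet_card_def using f by (intro card_inj_on_le) auto
  also have "\<dots> \<le> card {H \<in> planes_through N. excess H \<noteq> 0}"
    unfolding B_def by (intro card_mono) auto
  also have "\<dots> < meet_card S N" using card_heavy_planes_through_line[OF N] N(2) by simp
  finally show ?thesis .
qed

lemma ex_line_meeting_q:
  assumes L: "pg_line L" "meet_card S L = q - 1"
  obtains N where "pg_line N" "meet_card S N = q"
proof -
  obtain \<pi> \<pi>' where \<pi>: "\<pi> \<in> planes_through L" "\<pi>' \<in> planes_through L" "\<pi> \<noteq> \<pi>'"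
    "excess \<pi> = 0" "excess \<pi>' = 0"
    using two_light_planes_through_line[OF L] .
  have \<pi>_planes: "pg_plane \<pi>" "L \<subseteq> \<pi>" "pg_plane \<pi>'" "L \<subseteq> \<pi>'"
    using \<pi>(1,2) unfolding planes_through_def by auto
  have "0 < meet_card S L" "meet_card S L < q" using L(2) q_ge_2 by simp_all
  obtain X where X: "X \<in> S" "X \<subseteq> \<pi>" "\<not> X \<subseteq> L"
    using point_off_line_in_plane[OF L(1) \<open>0 < _\<close> \<open>_ < q\<close> \<pi>_planes(1,2)] .
  obtain X' where X': "X' \<in> S" "X' \<subseteq> \<pi>'" "\<not> X' \<subseteq> L"
    using point_off_line_in_plane[OF L(1) \<open>0 < _\<close> \<open>_ < q\<close> \<pi>_planes(3,4)] .
  have pX: "pg_point X" "pg_point X'" using points X(1) X'(1) by auto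
  have "X \<noteq> X'"
  proof
    assume "X = X'"
    then have "\<pi> = \<pi>'"
      using plane_through_line_and_point_unique[OF L(1) pX(1) X(3) \<pi>_planes(1,2) X(2) \<pi>_planes(3,4)]
        X'(2) by simp
    with \<pi>(3) show False ..
  qed
  then obtain N where N: "pg_line N" "X \<subseteq> N" "X' \<subseteq> N"
    using ex_line_through_points[OF pX] by blast
  have "\<exists>H\<in>planes_through N. P \<subseteq> H \<and> \<not> L \<subseteq> H \<and> excess H \<noteq> 0"
    if P: "P \<in> S" "P \<subseteq> L" for P
  proof -
    obtain H where H: "pg_plane H" "P \<subseteq> H" "X \<subseteq> H" "\<not> L \<subseteq> H" "excess H \<noteq> 0"
      using heavy_plane_off_line[OF L(1) \<pi>_planes(1,2) \<pi>(4) X P] .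
    obtain H' where H': "pg_plane H'" "P \<subseteq> H'" "X' \<subseteq> H'" "\<not> L \<subseteq> H'" "excess H' \<noteq> 0"
      using heavy_plane_off_line[OF L(1) \<pi>_planes(3,4) \<pi>(5) X' P] .
    have "H = H'" using heavy_plane_off_line_unique[OF L P H(1,2,4,5) H'(1,2,4,5)] .
    moreover have "vec.subspace H" using H(1) unfolding pg_sub_def by simp
    ultimately have "N \<subseteq> H"
      using line_through_points_subset[OF pX \<open>X \<noteq> X'\<close> N] H(3) H'(3) by simp
    then show ?thesis using H unfolding planes_through_def by blast
  qed
  moreover have "0 < meet_card S N" using X(1) N(2) meet_card_pos_iff by blast
  ultimately have "q - 1 < meet_card S N"
    using meet_card_lt_if_heavy_planes_cover[OF L(1) N(1)] L(2) by simp
  then show ?thesis using that N(1) meet_card_line_le[OF N(1)] by simp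
qed

end

theorem mainTheorem18:
  fixes S :: "('a::{field,finite} ^ 4) set set"
  defines "q \<equiv> CARD('a)"
  assumes points: "\<forall>P\<in>S. pg_point P"
    and card_S: "card S = q ^ 2"
    and div: "q_divisible q S"
    and span: "spanning S"
    and not_cyl: "\<not> two_cylinder q S"
  shows "\<forall>L. pg_line L \<longrightarrow> meet_card S L \<le> q - 2"
proof (intro allI impI)
  interpret S: divisible_point_set S q
    using points card_S div by unfold_locales (simp_all add: q_def)
  fix L :: "('a ^ 4) set"
  assume L: "pg_line L"
  have "meet_card S L \<noteq> q"
    using S.two_cylinder_if_line_meets_q[OF L] not_cyl by blast
  moreover have "meet_card S L \<noteq> q - 1"
    using S.ex_line_meeting_q[OF L] S.two_cylinder_if_line_meets_q not_cyl by blast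
  ultimately show "meet_card S L \<le> q - 2"
    using S.meet_card_line_le[OF L] by linarith
qed

end
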